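(* Let $n\in\{2,3\}$, let $\Gamma\subset\Gamma_\infty$ be a nonempty bounded relatively open set, let $\tilde{\mathbf d}\in\mathbb{R}^{n-1}$ be a unit vector and $0\neq\psi\in\mathscr{D}(\Gamma)$, and for $k>0$ set $\phi_k(\tilde{\mathbf{x}}):=e^{{\mathrm{i}} k\tilde{\mathbf d}\cdot\tilde{\mathbf{x}}}\psi(\tilde{\mathbf{x}})$. Then there exist $C>0$ and $k_0>0$, independent of $k$, such that for all $k\ge k_0$, $$|\langle T_k\phi_k,\phi_k\rangle_{H^{-1/2}(\Gamma)\times\tilde H^{1/2}(\Gamma)}|\le Ck^{-1/2}\|\phi_k\|^2_{\tilde H^{1/2}_k(\Gamma)}.$$
   Context: $\Gamma_\infty:=\{\mathbf{x}\in\mathbb{R}^n:x_n=0\}$ is identified with $\mathbb{R}^{n-1}$; $\mathscr{D}(\Gamma)=C_0^\infty(\Gamma)$. Fourier transform: $\hat u(\boldsymbol{\xi})=(2\pi)^{-(n-1)/2}\int e^{-{\mathrm{i}}\boldsymbol{\xi}\cdot\mathbf{x}}u(\mathbf{x})\,\mathrm{d}\mathbf{x}$. $\|\phi\|^2_{\tilde H^{1/2}_k(\Gamma)}=\int(k^2+|\boldsymbol{\xi}|^2)^{1/2}|\hat\phi(\boldsymbol{\xi})|^2\,\mathrm{d}\boldsymbol{\xi}$. $T_k\phi=(T_k^\infty\phi)|_\Gamma$ with $\widehat{T_k^\infty\phi}(\boldsymbol{\xi})=\frac{{\mathrm{i}}}{2}Z(\boldsymbol{\xi})\hat\phi(\boldsymbol{\xi})$,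 $Z(\boldsymbol{\xi})=\sqrt{k^2-|\boldsymbol{\xi}|^2}$ for $|\boldsymbol{\xi}|\le k$ and ${\mathrm{i}}\sqrt{|\boldsymbol{\xi}|^2-k^2}$ for $|\boldsymbol{\xi}|>k$ (the acoustic hypersingular operator). For $\phi\in\mathscr{D}(\Gamma)$ the pairing equals $(T_k\phi,\phi)_{L^2(\Gamma)}=\frac{{\mathrm{i}}}{2}\int Z(\boldsymbol{\xi})|\hat\phi(\boldsymbol{\xi})|^2\,\mathrm{d}\boldsymbol{\xi}$. *)

theory Defs
  imports "HOL-Analysis.Analysis"
begin

text \<open>The screen \<Gamma>_\<infinity> = {x_n = 0} is identified with R^(n-1), modelled by a
 Euclidean space type 'a with DIM('a) = n - 1.\<close>

coinductive smooth_fun :: "('a::euclidean_space \<Rightarrow> complex) \<Rightarrow> bool" where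
  "(\<forall>x. f differentiable (at x)) \<Longrightarrow>
   (\<forall>v. smooth_fun (\<lambda>x. frechet_derivative f (at x) v)) \<Longrightarrow> smooth_fun f"

definition tsupport :: "('a::euclidean_space \<Rightarrow> complex) \<Rightarrow> 'a set" where
  "tsupport f = closure {x. f x \<noteq> 0}"

definition test_functions :: "'a::euclidean_space set \<Rightarrow> ('a \<Rightarrow> complex) set" where
  "test_functions \<Gamma> = {f. smooth_fun f \<and> compact (tsupport f) \<and> tsupport f \<subseteq> \<Gamma>}"

definition fourier :: "('a::euclidean_space \<Rightarrow> complex) \<Rightarrow> 'a \<Rightarrow> complex" where
  "fourier u \<xi> = complex_of_real ((2 * pi) powr (- real DIM('a) / 2)) *
      (LINT x|lborel. exp (- \<i> * complex_of_real (\<xi> \<bullet> x)) * u x)"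

definition Zsym :: "real \<Rightarrow> 'a::euclidean_space \<Rightarrow> complex" where
  "Zsym k \<xi> = (if norm \<xi> \<le> k then complex_of_real (sqrt (k\<^sup>2 - (norm \<xi>)\<^sup>2))
               else \<i> * complex_of_real (sqrt ((norm \<xi>)\<^sup>2 - k\<^sup>2)))"

text \<open>The duality pairing <T_k \<phi>, \<phi>> for \<phi> \<in> D(\<Gamma>), given by
 (i/2) \<integral> Z(\<xi>) |\<phi>^(\<xi>)|^2 d\<xi>.\<close>
definition hypersingular_pairing :: "real \<Rightarrow> ('a::euclidean_space \<Rightarrow> complex) \<Rightarrow> complex" where
  "hypersingular_pairing k \<phi> =
     (\<i> / 2) * (LINT \<xi>|lborel. Zsym k \<xi> * complex_of_real ((cmod (fourier \<phi> \<xi>))\<^sup>2))"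

definition Hhalf_k_normsq :: "real \<Rightarrow> ('a::euclidean_space \<Rightarrow> complex) \<Rightarrow> real" where
  "Hhalf_k_normsq k \<phi> =
     (LINT \<xi>|lborel. sqrt (k\<^sup>2 + (norm \<xi>)\<^sup>2) * (cmod (fourier \<phi> \<xi>))\<^sup>2)"

end

theory Submission
  imports Defs
begin

text \<open>Modulation by \<open>exp (i k d\<cdot>x)\<close> translates the Fourier transform by \<open>k d\<close>, so both
  sides of the estimate integrate the fixed weight \<open>w = |\<psi>\<^sup>^|\<^sup>2\<close> against the translated
  multipliers \<open>Z (k d + \<eta>)\<close> and \<open>(k\<^sup>2 + |k d + \<eta>|\<^sup>2)\<^sup>1\<^sup>/\<^sup>2\<close>. Because \<open>|k d| = k\<close>, the
  quantity \<open>k\<^sup>2 - |k d + \<eta>|\<^sup>2 = -2k d\<cdot>\<eta> - |\<eta>|\<^sup>2\<close> is only linear in \<open>k\<close>, so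
  \<open>|Z (k d + \<eta>)| \<le> 2 \<surd>k (1 + |\<eta>|)\<close> and the pairing is at most \<open>\<surd>k \<integral> (1 + |\<eta>|) w\<close>,
  whereas \<open>(k\<^sup>2 + |\<xi>|\<^sup>2)\<^sup>1\<^sup>/\<^sup>2 \<ge> k\<close> makes the norm at least \<open>k \<integral> w\<close>.\<close>

lemma continuous_on_smooth_fun: "smooth_fun f \<Longrightarrow> continuous_on UNIV f"
  by (erule smooth_fun.cases)
    (auto intro: differentiable_imp_continuous_within continuous_at_imp_continuous_on)

lemma borel_measurable_fourier:
  fixes \<psi> :: "'a::euclidean_space \<Rightarrow> complex"
  assumes "continuous_on UNIV \<psi>"
  shows "fourier \<psi> \<in> borel_measurable borel"
proof -
  let ?f = "\<lambda>p::'a \<times> 'a. exp (- \<i> * complex_of_real (fst p \<bullet> snd p)) * \<psi> (snd p)"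
  have "continuous_on UNIV ?f"
    by (intro continuous_intros continuous_on_compose2[OF assms]) auto
  then have "?f \<in> borel_measurable borel"
    by (rule borel_measurable_continuous_onI)
  then have "?f \<in> borel_measurable (borel \<Otimes>\<^sub>M lborel)"
    by (simp add: borel_prod[symmetric] cong: measurable_cong_sets)
  then have "(\<lambda>\<xi>. LINT x|lborel. exp (- \<i> * complex_of_real (\<xi> \<bullet> x)) * \<psi> x)
               \<in> borel_measurable borel"
    by (intro lborel.borel_measurable_lebesgue_integral) (simp add: case_prod_beta)
  then show ?thesis
    unfolding fourier_def[abs_def] by measurable
qed

lemma norm_fourier_le:
  fixes \<psi> :: "'a::euclidean_space \<Rightarrow> complex"
  shows "cmod (fourier \<psi> \<xi>) \<le> (2 * pi) powr (- real DIM('a) / 2) * (LINT x|lborel. cmod (\<psi> x))"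
proof -
  have "cmod (LINT x|lborel. exp (- \<i> * complex_of_real (\<xi> \<bullet> x)) * \<psi> x)
          \<le> (LINT x|lborel. cmod (exp (- \<i> * complex_of_real (\<xi> \<bullet> x)) * \<psi> x))"
    by (rule integral_norm_bound)
  also have "\<dots> = (LINT x|lborel. cmod (\<psi> x))"
    by (simp add: norm_mult)
  finally show ?thesis
    unfolding fourier_def by (simp add: norm_mult mult_left_mono)
qed

lemma fourier_modulation:
  fixes \<psi> :: "'a::euclidean_space \<Rightarrow> complex"
  shows "fourier (\<lambda>x. exp (\<i> * complex_of_real (k * (d \<bullet> x))) * \<psi> x) \<xi> = fourier \<psi> (\<xi> - k *\<^sub>R d)"
proof -
  have "exp (- \<i> * complex_of_real (\<xi> \<bullet> x)) * (exp (\<i> * complex_of_real (k * (d \<bullet> x))) * \<psi> x)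
          = exp (- \<i> * complex_of_real ((\<xi> - k *\<^sub>R d) \<bullet> x)) * \<psi> x" for x
    by (simp add: inner_diff_left algebra_simps flip: exp_add)
  then show ?thesis
    unfolding fourier_def by (simp only:)
qed

lemma integral_lborel_translate:
  fixes f :: "'a::euclidean_space \<Rightarrow> 'b::{banach, second_countable_topology}"
  assumes "f \<in> borel_measurable borel"
  shows "(LINT \<xi>|lborel. f \<xi>) = (LINT \<eta>|lborel. f (c + \<eta>))"
proof -
  have "(LINT \<xi>|lborel. f \<xi>) = integral\<^sup>L (distr lborel borel ((+) c)) f"
    by (simp add: lborel_distr_plus)
  also have "\<dots> = (LINT \<eta>|lborel. f (c + \<eta>))"
    by (rule integral_distr) (use assms in auto)
  finally show ?thesis .
qed

lemma integrable_lborel_translate_iff: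
  fixes f :: "'a::euclidean_space \<Rightarrow> 'b::{banach, second_countable_topology}"
  assumes "f \<in> borel_measurable borel"
  shows "integrable lborel f \<longleftrightarrow> integrable lborel (\<lambda>\<eta>. f (c + \<eta>))"
proof -
  have "integrable lborel f \<longleftrightarrow> integrable (distr lborel borel ((+) c)) f"
    by (simp add: lborel_distr_plus)
  also have "\<dots> \<longleftrightarrow> integrable lborel (\<lambda>\<eta>. f (c + \<eta>))"
    by (rule integrable_distr_eq) (use assms in auto)
  finally show ?thesis .
qed

lemma borel_measurable_Zsym [measurable]: "Zsym k \<in> borel_measurable borel"
  unfolding Zsym_def[abs_def] by measurable

lemma norm_Zsym: "k \<ge> 0 \<Longrightarrow> cmod (Zsym k \<xi>) = sqrt \<bar>k\<^sup>2 - (norm \<xi>)\<^sup>2\<bar>"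
proof (cases "norm \<xi> \<le> k")
  case True
  then have "(norm \<xi>)\<^sup>2 \<le> k\<^sup>2" by (simp add: power_mono)
  then show ?thesis using True by (simp add: Zsym_def norm_mult)
next
  case False
  moreover assume "k \<ge> 0"
  ultimately have "k\<^sup>2 \<le> (norm \<xi>)\<^sup>2" by (simp add: power_mono)
  then show ?thesis using False by (simp add: Zsym_def norm_mult)
qed

lemma norm_Zsym_translate_le:
  fixes c :: "'a::euclidean_space"
  assumes "norm c = k" "k \<ge> 1"
  shows "cmod (Zsym k (c + \<eta>)) \<le> 2 * sqrt k * (1 + norm \<eta>)"
proof -
  have "c \<bullet> c = k\<^sup>2"
    using assms(1) by (metis power2_norm_eq_inner)
  then have "(norm (c + \<eta>))\<^sup>2 = k\<^sup>2 + 2 * (c \<bullet> \<eta>) + (norm \<eta>)\<^sup>2"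
    by (simp add: power2_norm_eq_inner inner_add_left inner_add_right inner_commute)
  moreover have "\<bar>c \<bullet> \<eta>\<bar> \<le> k * norm \<eta>"
    using Cauchy_Schwarz_ineq2[of c \<eta>] assms(1) by simp
  ultimately have "\<bar>k\<^sup>2 - (norm (c + \<eta>))\<^sup>2\<bar> \<le> 2 * k * norm \<eta> + (norm \<eta>)\<^sup>2"
    using zero_le_power2[of "norm \<eta>"] by linarith
  also have "\<dots> \<le> 4 * k * (1 + norm \<eta>)\<^sup>2"
  proof -
    have "(norm \<eta>)\<^sup>2 \<le> k * (norm \<eta>)\<^sup>2" "0 \<le> k * norm \<eta>" "0 \<le> k * (norm \<eta>)\<^sup>2"
      using assms(2) mult_right_mono[of 1 k "(norm \<eta>)\<^sup>2"] by auto
    moreover have "4 * k * (1 + norm \<eta>)\<^sup>2 = 4 * k + 8 * (k * norm \<eta>) + 4 * (k * (norm \<eta>)\<^sup>2)"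
      by (simp add: power2_eq_square algebra_simps)
    ultimately show ?thesis
      using assms(2) by linarith
  qed
  also have "\<dots> = (2 * sqrt k * (1 + norm \<eta>))\<^sup>2"
    using assms(2) by (simp add: power_mult_distrib)
  finally show ?thesis
    using assms by (subst norm_Zsym) (auto intro!: real_le_lsqrt)
qed

lemma sqrt_weight_le_Zsym:
  assumes "k > 0"
  shows "sqrt (k\<^sup>2 + (norm \<xi>)\<^sup>2) \<le> 2 * cmod (Zsym k \<xi>) + 3 * k * indicator (ball 0 (2 * k)) \<xi>"
proof (cases "norm \<xi> < 2 * k")
  case True
  then have "(norm \<xi>)\<^sup>2 \<le> (2 * k)\<^sup>2"
    by (intro power_mono) auto
  then have "k\<^sup>2 + (norm \<xi>)\<^sup>2 \<le> 9 * k\<^sup>2"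
    by (simp add: power_mult_distrib) (use zero_le_power2[of k] in linarith)
  also have "\<dots> = (3 * k)\<^sup>2"
    by (simp add: power_mult_distrib)
  finally have "k\<^sup>2 + (norm \<xi>)\<^sup>2 \<le> (3 * k)\<^sup>2" .
  then have "sqrt (k\<^sup>2 + (norm \<xi>)\<^sup>2) \<le> 3 * k"
    using assms by (intro real_le_lsqrt) auto
  moreover have "indicator (ball 0 (2 * k)) \<xi> = (1::real)"
    using True by (simp add: indicator_def)
  ultimately show ?thesis
    using norm_ge_zero[of "Zsym k \<xi>"] by (simp only: mult_1_right)
next
  case False
  then have "(2 * k)\<^sup>2 \<le> (norm \<xi>)\<^sup>2"
    using assms by (intro power_mono) auto
  then have "k\<^sup>2 \<le> (norm \<xi>)\<^sup>2" "k\<^sup>2 + (norm \<xi>)\<^sup>2 \<le> 4 * ((norm \<xi>)\<^sup>2 - k\<^sup>2)"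
    by (simp_all add: power_mult_distrib algebra_simps) (use zero_le_power2[of k] in linarith)+
  then have "sqrt (k\<^sup>2 + (norm \<xi>)\<^sup>2) \<le> 2 * sqrt ((norm \<xi>)\<^sup>2 - k\<^sup>2)"
    by (intro real_le_lsqrt) (simp_all add: power_mult_distrib)
  then show ?thesis
    using False assms \<open>k\<^sup>2 \<le> (norm \<xi>)\<^sup>2\<close> by (simp add: Zsym_def norm_mult)
qed

lemma one_plus_norm_le_sqrt_weight_translate:
  fixes c :: "'a::euclidean_space"
  assumes "norm c = k" "k > 0"
  shows "1 + norm \<eta> \<le> 2 * (1 + k) / k * sqrt (k\<^sup>2 + (norm (c + \<eta>))\<^sup>2)"
proof -
  let ?s = "sqrt (k\<^sup>2 + (norm (c + \<eta>))\<^sup>2)"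
  have "k \<le> ?s" "norm (c + \<eta>) \<le> ?s"
    using assms by (auto intro: real_le_rsqrt)
  moreover have "norm \<eta> \<le> k + norm (c + \<eta>)"
    using norm_triangle_ineq4[of "c + \<eta>" c] assms(1) by simp
  moreover have "?s \<le> (1 + k) / k * ?s"
    using assms(2) mult_right_mono[of 1 "(1 + k) / k" ?s] by simp
  moreover have "1 + k \<le> (1 + k) / k * ?s"
    using \<open>k \<le> ?s\<close> assms(2) mult_left_mono[of k ?s "(1 + k) / k"] by simp
  moreover have "2 * (1 + k) / k * ?s = (1 + k) / k * ?s + (1 + k) / k * ?s"
    by simp
  ultimately show ?thesis
    by linarith
qed

lemma sqrt_weight_translate_le:
  fixes c :: "'a::euclidean_space"
  assumes "norm c = k" "k \<ge> 1"
  shows "sqrt (k\<^sup>2 + (norm (c + \<eta>))\<^sup>2) \<le> 3 * k * (1 + norm \<eta>)"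
proof -
  have "sqrt (k\<^sup>2 + (norm (c + \<eta>))\<^sup>2) \<le> k + norm (c + \<eta>)"
    using assms sqrt_sum_squares_le_sum by simp
  also have "\<dots> \<le> 2 * k + norm \<eta>"
    using norm_triangle_ineq[of c \<eta>] assms by simp
  also have "\<dots> \<le> 3 * k * (1 + norm \<eta>)"
  proof -
    have "norm \<eta> \<le> k * norm \<eta>"
      using assms(2) mult_right_mono[of 1 k "norm \<eta>"] by simp
    moreover have "3 * k * (1 + norm \<eta>) = 3 * k + 3 * (k * norm \<eta>)"
      by (simp add: algebra_simps)
    ultimately show ?thesis
      using assms(2) norm_ge_zero[of \<eta>] by linarith
  qed
  finally show ?thesis .
qed

lemma integrable_real_nonneg_bound:
  fixes f g :: "'b \<Rightarrow> real"
  assumes "integrable M f" "g \<in> borel_measurable M" "\<And>x. 0 \<le> g x" "\<And>x. g x \<le> f x"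
  shows "integrable M g"
proof (rule Bochner_Integration.integrable_bound[OF assms(1,2)], rule AE_I2)
  show "norm (g x) \<le> norm (f x)" for x
    using assms(3,4)[of x] by simp
qed

lemma integrable_of_integrable_one_plus_norm_mult:
  fixes w :: "'a::real_normed_vector \<Rightarrow> real"
  assumes "integrable M (\<lambda>x. (1 + norm x) * w x)" "\<And>x. 0 \<le> w x" "w \<in> borel_measurable M"
  shows "integrable M w"
proof (rule integrable_real_nonneg_bound[OF assms(1,3,2)])
  show "w x \<le> (1 + norm x) * w x" for x
    using assms(2)[of x] by (simp add: distrib_right)
qed

lemma norm_integral_Zsym_translate_le:
  fixes w :: "'a::euclidean_space \<Rightarrow> real" and d :: 'a
  assumes [measurable]: "w \<in> borel_measurable borel" and w_nonneg: "\<And>\<eta>. 0 \<le> w \<eta>"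
    and "integrable lborel (\<lambda>\<eta>. (1 + norm \<eta>) * w \<eta>)" and "k \<ge> 1" and "norm d = 1"
  shows "cmod (LINT \<xi>|lborel. Zsym k \<xi> * complex_of_real (w (\<xi> - k *\<^sub>R d)))
           \<le> 2 * sqrt k * (LINT \<eta>|lborel. (1 + norm \<eta>) * w \<eta>)"
proof -
  have "norm (k *\<^sub>R d) = k"
    using assms by simp
  have "cmod (LINT \<xi>|lborel. Zsym k \<xi> * complex_of_real (w (\<xi> - k *\<^sub>R d)))
          \<le> (LINT \<xi>|lborel. cmod (Zsym k \<xi> * complex_of_real (w (\<xi> - k *\<^sub>R d))))"
    by (rule integral_norm_bound)
  also have "\<dots> = (LINT \<eta>|lborel. cmod (Zsym k (k *\<^sub>R d + \<eta>)) * w \<eta>)"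
    using w_nonneg by (subst integral_lborel_translate[where c = "k *\<^sub>R d"]) (auto simp: norm_mult)
  also have "\<dots> \<le> (LINT \<eta>|lborel. 2 * sqrt k * ((1 + norm \<eta>) * w \<eta>))"
  proof (rule integral_mono')
    show "integrable lborel (\<lambda>\<eta>. 2 * sqrt k * ((1 + norm \<eta>) * w \<eta>))"
      using assms by simp
    show "cmod (Zsym k (k *\<^sub>R d + \<eta>)) * w \<eta> \<le> 2 * sqrt k * ((1 + norm \<eta>) * w \<eta>)" for \<eta>
      using mult_right_mono[OF norm_Zsym_translate_le[OF \<open>norm (k *\<^sub>R d) = k\<close> \<open>k \<ge> 1\<close>] w_nonneg]
      by (simp add: mult.assoc)
    show "0 \<le> 2 * sqrt k * ((1 + norm \<eta>) * w \<eta>)" for \<eta>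
      using w_nonneg[of \<eta>] assms(4) by simp
  qed
  finally show ?thesis
    by simp
qed

lemma integral_sqrt_weight_translate_ge:
  fixes w :: "'a::euclidean_space \<Rightarrow> real" and d :: 'a
  assumes [measurable]: "w \<in> borel_measurable borel" and w_nonneg: "\<And>\<eta>. 0 \<le> w \<eta>"
    and "integrable lborel (\<lambda>\<eta>. (1 + norm \<eta>) * w \<eta>)" and "k \<ge> 1" and "norm d = 1"
  shows "k * (LINT \<eta>|lborel. w \<eta>) \<le> (LINT \<xi>|lborel. sqrt (k\<^sup>2 + (norm \<xi>)\<^sup>2) * w (\<xi> - k *\<^sub>R d))"
proof -
  let ?s = "\<lambda>\<eta>. sqrt (k\<^sup>2 + (norm (k *\<^sub>R d + \<eta>))\<^sup>2)"
  have "norm (k *\<^sub>R d) = k"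
    using assms by simp
  have "integrable lborel w"
    using assms(3) w_nonneg by (rule integrable_of_integrable_one_plus_norm_mult) simp
  moreover have "integrable lborel (\<lambda>\<eta>. ?s \<eta> * w \<eta>)"
  proof (rule integrable_real_nonneg_bound[where f = "\<lambda>\<eta>. 3 * k * ((1 + norm \<eta>) * w \<eta>)"])
    show "?s \<eta> * w \<eta> \<le> 3 * k * ((1 + norm \<eta>) * w \<eta>)" for \<eta>
      using mult_right_mono[OF sqrt_weight_translate_le[OF \<open>norm (k *\<^sub>R d) = k\<close> \<open>k \<ge> 1\<close>] w_nonneg]
      by (simp add: mult.assoc)
  qed (use assms w_nonneg in simp_all)
  moreover have "k \<le> ?s \<eta>" for \<eta>
    using assms(4) by (intro real_le_rsqrt) auto
  ultimately have "(LINT \<eta>|lborel. k * w \<eta>) \<le> (LINT \<eta>|lborel. ?s \<eta> * w \<eta>)"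
    using w_nonneg by (intro integral_mono mult_right_mono) auto
  also have "\<dots> = (LINT \<xi>|lborel. sqrt (k\<^sup>2 + (norm \<xi>)\<^sup>2) * w (\<xi> - k *\<^sub>R d))"
    by (subst integral_lborel_translate[where c = "k *\<^sub>R d"]) simp_all
  finally show ?thesis
    by simp
qed

lemma not_integrable_sqrt_weight_translate:
  fixes w :: "'a::euclidean_space \<Rightarrow> real" and d :: 'a
  assumes [measurable]: "w \<in> borel_measurable borel" and w_nonneg: "\<And>\<eta>. 0 \<le> w \<eta>"
    and "\<not> integrable lborel (\<lambda>\<eta>. (1 + norm \<eta>) * w \<eta>)" and "k > 0" and "norm d = 1"
  shows "\<not> integrable lborel (\<lambda>\<xi>. sqrt (k\<^sup>2 + (norm \<xi>)\<^sup>2) * w (\<xi> - k *\<^sub>R d))"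
proof
  let ?s = "\<lambda>\<eta>. sqrt (k\<^sup>2 + (norm (k *\<^sub>R d + \<eta>))\<^sup>2)"
  have "norm (k *\<^sub>R d) = k"
    using assms by simp
  assume "integrable lborel (\<lambda>\<xi>. sqrt (k\<^sup>2 + (norm \<xi>)\<^sup>2) * w (\<xi> - k *\<^sub>R d))"
  then have "integrable lborel (\<lambda>\<eta>. 2 * (1 + k) / k * (?s \<eta> * w \<eta>))"
    by (subst (asm) integrable_lborel_translate_iff[where c = "k *\<^sub>R d"]) auto
  then have "integrable lborel (\<lambda>\<eta>. (1 + norm \<eta>) * w \<eta>)"
  proof (rule integrable_real_nonneg_bound)
    show "(1 + norm \<eta>) * w \<eta> \<le> 2 * (1 + k) / k * (?s \<eta> * w \<eta>)" for \<eta>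
      using mult_right_mono[OF one_plus_norm_le_sqrt_weight_translate[OF \<open>norm (k *\<^sub>R d) = k\<close> \<open>k > 0\<close>]
          w_nonneg]
      by (simp add: mult.assoc)
  qed (use w_nonneg in simp_all)
  with assms(3) show False ..
qed

lemma not_integrable_Zsym_mult:
  fixes v :: "'a::euclidean_space \<Rightarrow> real"
  assumes [measurable]: "v \<in> borel_measurable borel"
    and v_nonneg: "\<And>\<xi>. 0 \<le> v \<xi>" and v_bounded: "\<And>\<xi>. v \<xi> \<le> B" and "k > 0"
    and "\<not> integrable lborel (\<lambda>\<xi>. sqrt (k\<^sup>2 + (norm \<xi>)\<^sup>2) * v \<xi>)"
  shows "\<not> integrable lborel (\<lambda>\<xi>. Zsym k \<xi> * complex_of_real (v \<xi>))"
proof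
  let ?\<chi> = "indicator (ball (0::'a) (2 * k)) :: 'a \<Rightarrow> real"
  assume "integrable lborel (\<lambda>\<xi>. Zsym k \<xi> * complex_of_real (v \<xi>))"
  moreover have "integrable lborel ?\<chi>"
    using emeasure_bounded_finite[of "ball (0::'a) (2 * k)"] by (simp add: integrable_indicator_iff)
  ultimately have "integrable lborel (\<lambda>\<xi>. 2 * cmod (Zsym k \<xi> * complex_of_real (v \<xi>)) + 3 * k * B * ?\<chi> \<xi>)"
    by (intro Bochner_Integration.integrable_add Bochner_Integration.integrable_mult_right
        Bochner_Integration.integrable_norm)
  then have "integrable lborel (\<lambda>\<xi>. sqrt (k\<^sup>2 + (norm \<xi>)\<^sup>2) * v \<xi>)"
  proof (rule integrable_real_nonneg_bound)
    fix \<xi>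
    have "sqrt (k\<^sup>2 + (norm \<xi>)\<^sup>2) * v \<xi> \<le> (2 * cmod (Zsym k \<xi>) + 3 * k * ?\<chi> \<xi>) * v \<xi>"
      using sqrt_weight_le_Zsym[OF \<open>k > 0\<close>] v_nonneg by (rule mult_right_mono)
    also have "\<dots> \<le> 2 * cmod (Zsym k \<xi>) * v \<xi> + 3 * k * ?\<chi> \<xi> * B"
      using v_bounded[of \<xi>] \<open>k > 0\<close> by (simp add: distrib_right indicator_def)
    finally show "sqrt (k\<^sup>2 + (norm \<xi>)\<^sup>2) * v \<xi> \<le> 2 * cmod (Zsym k \<xi> * complex_of_real (v \<xi>)) + 3 * k * B * ?\<chi> \<xi>"
      using v_nonneg[of \<xi>] by (simp add: norm_mult algebra_simps)
  qed (use v_nonneg in simp_all)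
  with assms(5) show False ..
qed

lemma powr_neg_half_mult_self:
  assumes "k > 0"
  shows "k powr (-1/2) * k = sqrt (k::real)"
proof -
  have "k powr (-1/2) * k = k powr (-1/2 + 1)"
    using assms powr_add[of k "-1/2" 1] by simp
  also have "\<dots> = sqrt k"
    using assms by (simp add: powr_half_sqrt)
  finally show ?thesis .
qed

lemma norm_translated_pairing_le:
  fixes w :: "'a::euclidean_space \<Rightarrow> real" and d :: 'a
  assumes w_measurable [measurable]: "w \<in> borel_measurable borel" and w_nonneg: "\<And>\<eta>. 0 \<le> w \<eta>"
    and moment_integrable: "integrable lborel (\<lambda>\<eta>. (1 + norm \<eta>) * w \<eta>)"
    and moment_le: "(LINT \<eta>|lborel. (1 + norm \<eta>) * w \<eta>) \<le> C * (LINT \<eta>|lborel. w \<eta>)"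
    and "0 \<le> C" and "k \<ge> 1" and "norm d = 1"
  shows "cmod ((\<i> / 2) * (LINT \<xi>|lborel. Zsym k \<xi> * complex_of_real (w (\<xi> - k *\<^sub>R d))))
           \<le> C * k powr (-1/2) * (LINT \<xi>|lborel. sqrt (k\<^sup>2 + (norm \<xi>)\<^sup>2) * w (\<xi> - k *\<^sub>R d))"
proof -
  have "cmod ((\<i> / 2) * (LINT \<xi>|lborel. Zsym k \<xi> * complex_of_real (w (\<xi> - k *\<^sub>R d))))
          \<le> sqrt k * (LINT \<eta>|lborel. (1 + norm \<eta>) * w \<eta>)"
    using norm_integral_Zsym_translate_le[OF w_measurable w_nonneg moment_integrable \<open>k \<ge> 1\<close> \<open>norm d = 1\<close>]
    by (simp add: norm_mult)
  also have "\<dots> \<le> sqrt k * (C * (LINT \<eta>|lborel. w \<eta>))"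
    using moment_le \<open>k \<ge> 1\<close> by (intro mult_left_mono) simp_all
  also have "\<dots> = C * k powr (-1/2) * (k * (LINT \<eta>|lborel. w \<eta>))"
    using \<open>k \<ge> 1\<close> powr_neg_half_mult_self[of k] by (simp add: mult_ac)
  also have "\<dots> \<le> C * k powr (-1/2) * (LINT \<xi>|lborel. sqrt (k\<^sup>2 + (norm \<xi>)\<^sup>2) * w (\<xi> - k *\<^sub>R d))"
    using integral_sqrt_weight_translate_ge[OF w_measurable w_nonneg moment_integrable \<open>k \<ge> 1\<close> \<open>norm d = 1\<close>]
      \<open>0 \<le> C\<close>
    by (intro mult_left_mono) simp_all
  finally show ?thesis .
qed

lemma translated_integrals_eq_0:
  fixes w :: "'a::euclidean_space \<Rightarrow> real" and d :: 'a
  assumes w_measurable [measurable]: "w \<in> borel_measurable borel"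
    and w_nonneg: "\<And>\<eta>. 0 \<le> w \<eta>" and w_bounded: "\<And>\<eta>. w \<eta> \<le> B"
    and moment_not_integrable: "\<not> integrable lborel (\<lambda>\<eta>. (1 + norm \<eta>) * w \<eta>)"
    and "k > 0" and "norm d = 1"
  shows "(LINT \<xi>|lborel. Zsym k \<xi> * complex_of_real (w (\<xi> - k *\<^sub>R d))) = 0"
    and "(LINT \<xi>|lborel. sqrt (k\<^sup>2 + (norm \<xi>)\<^sup>2) * w (\<xi> - k *\<^sub>R d)) = 0"
proof -
  have "\<not> integrable lborel (\<lambda>\<xi>. sqrt (k\<^sup>2 + (norm \<xi>)\<^sup>2) * w (\<xi> - k *\<^sub>R d))"
    by (rule not_integrable_sqrt_weight_translate[OF w_measurable w_nonneg moment_not_integrable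
          \<open>k > 0\<close> \<open>norm d = 1\<close>])
  moreover from this have "\<not> integrable lborel (\<lambda>\<xi>. Zsym k \<xi> * complex_of_real (w (\<xi> - k *\<^sub>R d)))"
    by (rule not_integrable_Zsym_mult[where B = B, rotated -1]) (simp_all add: w_nonneg w_bounded \<open>k > 0\<close>)
  ultimately show "(LINT \<xi>|lborel. Zsym k \<xi> * complex_of_real (w (\<xi> - k *\<^sub>R d))) = 0"
    and "(LINT \<xi>|lborel. sqrt (k\<^sup>2 + (norm \<xi>)\<^sup>2) * w (\<xi> - k *\<^sub>R d)) = 0"
    by (simp_all add: not_integrable_integral_eq)
qed

text \<open>If \<open>(1 + |\<eta>|) w\<close> is not integrable, both integrals take the junk value \<open>0\<close>; otherwise
  the constant \<open>M/A + 1\<close> works, where \<open>A = \<integral> w\<close> and \<open>M = \<integral> (1 + |\<eta>|) w\<close> (and \<open>M = 0\<close> if \<open>A = 0\<close>).\<close>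

lemma translated_pairing_estimate:
  fixes w :: "'a::euclidean_space \<Rightarrow> real" and d :: 'a
  assumes w_measurable [measurable]: "w \<in> borel_measurable borel"
    and w_nonneg: "\<And>\<eta>. 0 \<le> w \<eta>" and w_bounded: "\<And>\<eta>. w \<eta> \<le> B" and "norm d = 1"
  shows "\<exists>C>0. \<forall>k\<ge>1. cmod ((\<i> / 2) * (LINT \<xi>|lborel. Zsym k \<xi> * complex_of_real (w (\<xi> - k *\<^sub>R d))))
           \<le> C * k powr (-1/2) * (LINT \<xi>|lborel. sqrt (k\<^sup>2 + (norm \<xi>)\<^sup>2) * w (\<xi> - k *\<^sub>R d))"
proof (cases "integrable lborel (\<lambda>\<eta>. (1 + norm \<eta>) * w \<eta>)")
  case True
  define A where "A = (LINT \<eta>|lborel. w \<eta>)"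
  define M where "M = (LINT \<eta>|lborel. (1 + norm \<eta>) * w \<eta>)"
  have "0 \<le> A" "0 \<le> M"
    unfolding A_def M_def using w_nonneg by (auto intro: integral_nonneg_AE)
  have "M = 0" if "A = 0"
  proof -
    have "integrable lborel w"
      using True w_nonneg by (rule integrable_of_integrable_one_plus_norm_mult) simp
    then have "AE \<eta> in lborel. w \<eta> = 0"
      using \<open>A = 0\<close> w_nonneg by (simp add: A_def integral_nonneg_eq_0_iff_AE)
    then show "M = 0"
      unfolding M_def by (auto intro: integral_eq_zero_AE)
  qed
  then have "M \<le> (M / A + 1) * A"
    using \<open>0 \<le> A\<close> by (cases "A = 0") (simp_all add: distrib_right)
  moreover have "0 < M / A + 1"
    using \<open>0 \<le> A\<close> \<open>0 \<le> M\<close> by (simp add: add_nonneg_pos)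
  ultimately show ?thesis
    using w_nonneg \<open>norm d = 1\<close>
    by (intro exI[of _ "M / A + 1"] conjI allI impI norm_translated_pairing_le[OF w_measurable _ True])
      (simp_all add: A_def M_def)
next
  case False
  then show ?thesis
    using translated_integrals_eq_0[OF w_measurable w_nonneg w_bounded False _ \<open>norm d = 1\<close>]
    by (intro exI[of _ 1]) simp
qed

theorem mainTheorem12:
  fixes \<Gamma> :: "'a::euclidean_space set" and d :: 'a and \<psi> :: "'a \<Rightarrow> complex"
  assumes "DIM('a) \<in> {1, 2}"
    and "\<Gamma> \<noteq> {}" and "bounded \<Gamma>" and "open \<Gamma>"
    and "norm d = 1"
    and "\<psi> \<in> test_functions \<Gamma>" and "\<psi> \<noteq> (\<lambda>x. 0)"
  shows "\<exists>C>0. \<exists>k0>0. \<forall>k\<ge>k0.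
           cmod (hypersingular_pairing k (\<lambda>x. exp (\<i> * complex_of_real (k * (d \<bullet> x))) * \<psi> x))
             \<le> C * k powr (-1/2) *
               Hhalf_k_normsq k (\<lambda>x. exp (\<i> * complex_of_real (k * (d \<bullet> x))) * \<psi> x)"
proof -
  \<comment> \<open>Only continuity of \<open>\<psi>\<close> is needed: the remaining hypotheses would make
    \<open>(1 + |\<eta>|) |\<psi>\<^sup>^|\<^sup>2\<close> integrable, but \<open>translated_pairing_estimate\<close> does not require it.\<close>
  define w where "w \<eta> = (cmod (fourier \<psi> \<eta>))\<^sup>2" for \<eta>
  define B where "B = ((2 * pi) powr (- real DIM('a) / 2) * (LINT x|lborel. cmod (\<psi> x)))\<^sup>2"
  have "continuous_on UNIV \<psi>"
    using assms(6) by (auto simp: test_functions_def intro: continuous_on_smooth_fun)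
  then have "w \<in> borel_measurable borel"
    unfolding w_def[abs_def] using borel_measurable_fourier by measurable
  moreover have "0 \<le> w \<eta>" and "w \<eta> \<le> B" for \<eta>
    unfolding w_def B_def using norm_fourier_le[of \<psi> \<eta>] by (auto intro: power_mono)
  ultimately obtain C where "C > 0" and C: "\<forall>k\<ge>1.
      cmod ((\<i> / 2) * (LINT \<xi>|lborel. Zsym k \<xi> * complex_of_real (w (\<xi> - k *\<^sub>R d))))
        \<le> C * k powr (-1/2) * (LINT \<xi>|lborel. sqrt (k\<^sup>2 + (norm \<xi>)\<^sup>2) * w (\<xi> - k *\<^sub>R d))"
    using translated_pairing_estimate[of w B d] \<open>norm d = 1\<close> by blast
  have pairing_eq: "hypersingular_pairing k (\<lambda>x. exp (\<i> * complex_of_real (k * (d \<bullet> x))) * \<psi> x)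
          = (\<i> / 2) * (LINT \<xi>|lborel. Zsym k \<xi> * complex_of_real (w (\<xi> - k *\<^sub>R d)))"
    and norm_eq: "Hhalf_k_normsq k (\<lambda>x. exp (\<i> * complex_of_real (k * (d \<bullet> x))) * \<psi> x)
          = (LINT \<xi>|lborel. sqrt (k\<^sup>2 + (norm \<xi>)\<^sup>2) * w (\<xi> - k *\<^sub>R d))" for k
    unfolding hypersingular_pairing_def Hhalf_k_normsq_def fourier_modulation w_def by (rule refl)+
  show ?thesis
    unfolding pairing_eq norm_eq using \<open>C > 0\<close> C by (intro exI[of _ C] exI[of _ "1::real"] conjI) simp_all
qed

end
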